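(* For every $k\ge1$, $$A_{2k}=\{F_{2k}\}\cup\left\{(n+2)F_{2k}+\left\lfloor\frac{n+1}{\phi}\right\rfloor F_{2k-1}\ :\ n\ge 0\right\},$$ where $\phi=(1+\sqrt5)/2$.
   Context: Fibonacci numbers: $F_1=F_2=1$, $F_{n+1}=F_n+F_{n-1}$ for $n\ge2$. Chung–Graham decomposition: every positive integer $n$ has a unique representation $n=\sum_{i\ge1}c_iF_{2i}$ with $c_i\in\{0,1,2\}$, only finitely many nonzero, such that whenever $c_i=c_j=2$ with $i<j$ there is $k$ with $i<k<j$ and $c_k=0$. Let $\mathcal{CG}(n)$ be the set of $F_{2i}$ with $c_i\neq0$ in this decomposition. For $k\ge1$, $A_{2k}=\{n\ge1:\min\mathcal{CG}(n)=F_{2k}\}$. *)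

theory Defs
  imports Complex_Main "HOL-Number_Theory.Fib"
begin

text \<open>Fibonacci numbers: fib 1 = fib 2 = 1 (library fib, with fib 0 = 0).\<close>

definition phi :: real where "phi = (1 + sqrt 5) / 2"

definition is_CG :: "nat \<Rightarrow> (nat \<Rightarrow> nat) \<Rightarrow> bool" where
  "is_CG n c \<longleftrightarrow>
     c 0 = 0 \<and> (\<forall>i. c i \<le> 2) \<and> finite {i. c i \<noteq> 0} \<and>
     n = (\<Sum>i\<in>{i. c i \<noteq> 0}. c i * fib (2 * i)) \<and>
     (\<forall>i j. 1 \<le> i \<and> i < j \<and> c i = 2 \<and> c j = 2 \<longrightarrow> (\<exists>k. i < k \<and> k < j \<and> c k = 0))"

definition CG_coeffs :: "nat \<Rightarrow> nat \<Rightarrow> nat" where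
  "CG_coeffs n = (THE c. is_CG n c)"

definition CG :: "nat \<Rightarrow> nat set" where
  "CG n = {fib (2 * i) | i. 1 \<le> i \<and> CG_coeffs n i \<noteq> 0}"

definition A :: "nat \<Rightarrow> nat set" where
  "A k = {n. 1 \<le> n \<and> Min (CG n) = fib (2 * k)}"

end

theory Submission
  imports Defs
begin

text \<open>
  Write the Chung--Graham digits of \<open>n \<in> A k\<close> as \<open>d\<close> at position \<open>k\<close> followed by a tail
  \<open>g\<close>. Since \<open>F(2(k+1+j)) = F(2j+3) F(2k) + F(2j+2) F(2k-1)\<close>, this gives
  \<open>n = (d + X) F(2k) + Y F(2k-1)\<close> with \<open>X = \<Sum> g j F(2j+3)\<close> and \<open>Y = \<Sum> g j F(2j+2)\<close>.
  As \<open>F(m+1) - \<phi> F(m) = (-1/\<phi>)\<^sup>m\<close>, the discrepancy \<open>X - \<phi> Y = \<Sum> g j \<phi>^(-2j-2)\<close> is a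
  base-\<open>\<phi>\<^sup>2\<close> expansion whose digit condition confines it to \<open>[0, 1)\<close>, and to \<open>[0, \<phi> - 1)\<close>
  exactly when every digit 2 of \<open>g\<close> is preceded by a 0. Hence \<open>d\<close> is a legal lowest digit
  before \<open>g\<close> iff \<open>Y = \<lfloor>(d + X - 1) / \<phi>\<rfloor>\<close>; putting \<open>m = d + X - 2\<close> gives the stated form,
  the only exception being \<open>d = 1\<close>, \<open>g = 0\<close>, i.e. \<open>n = F(2k)\<close>. Conversely, for every \<open>m\<close> the
  tail \<open>g\<close> is recovered from the decomposition of \<open>Y = \<lfloor>(m + 1) / \<phi>\<rfloor>\<close> shifted by one place.
\<close>

section \<open>Chung--Graham digit sequences\<close>

definition cg_admissible :: "(nat \<Rightarrow> nat) \<Rightarrow> bool" where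
  "cg_admissible c \<longleftrightarrow> (\<forall>i. c i \<le> 2) \<and>
     (\<forall>i j. i < j \<and> c i = 2 \<and> c j = 2 \<longrightarrow> (\<exists>k. i < k \<and> k < j \<and> c k = 0))"

definition cg_sum :: "(nat \<Rightarrow> nat) \<Rightarrow> nat \<Rightarrow> nat" where
  "cg_sum c m = (\<Sum>i<m. c i * fib (2 * i))"

text \<open>The condition under which position \<open>m\<close> may receive a digit 2.\<close>

definition twos_closed_below :: "(nat \<Rightarrow> nat) \<Rightarrow> nat \<Rightarrow> bool" where
  "twos_closed_below c m \<longleftrightarrow> (\<forall>j<m. c j = 2 \<longrightarrow> (\<exists>k. j < k \<and> k < m \<and> c k = 0))"

lemma cg_admissible_le_2: "cg_admissible c \<Longrightarrow> c i \<le> 2"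
  by (simp add: cg_admissible_def)

lemma cg_admissible_zero_between:
  "cg_admissible c \<Longrightarrow> i < j \<Longrightarrow> c i = 2 \<Longrightarrow> c j = 2 \<Longrightarrow> \<exists>k. i < k \<and> k < j \<and> c k = 0"
  unfolding cg_admissible_def by blast

lemma cg_sum_Suc: "cg_sum c (Suc m) = cg_sum c m + c m * fib (2 * m)"
  by (simp add: cg_sum_def)

lemma cg_sum_cong: "(\<And>i. i < m \<Longrightarrow> c i = c' i) \<Longrightarrow> cg_sum c m = cg_sum c' m"
  unfolding cg_sum_def by (rule sum.cong) simp_all

lemma cg_sum_eq_if_zero_above:
  assumes "\<forall>i\<ge>N. c i = 0" "N \<le> M"
  shows "cg_sum c M = cg_sum c N"
  unfolding cg_sum_def by (rule sum.mono_neutral_right) (use assms in auto)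

lemma twos_closed_below_Suc_zero: "c m = 0 \<Longrightarrow> twos_closed_below c (Suc m)"
  unfolding twos_closed_below_def using less_Suc_eq by fastforce

lemma twos_closed_below_Suc_one:
  assumes "c m = 1"
  shows "twos_closed_below c (Suc m) \<longleftrightarrow> twos_closed_below c m"
  unfolding twos_closed_below_def using assms less_Suc_eq by auto

lemma twos_closed_below_Suc_two: "c m = 2 \<Longrightarrow> \<not> twos_closed_below c (Suc m)"
  unfolding twos_closed_below_def by (metis less_Suc_eq not_less_eq)

lemma twos_closed_below_if_two:
  "cg_admissible c \<Longrightarrow> c m = 2 \<Longrightarrow> twos_closed_below c m"
  unfolding twos_closed_below_def using cg_admissible_zero_between by blast

lemma fib_odd_Suc: "fib (2 * m + 3) = fib (2 * m + 2) + fib (2 * m + 1)"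
  using fib_plus_2[of "2 * m + 1"] by (simp add: numeral_3_eq_3)

lemma cg_sum_bound:
  assumes "cg_admissible c"
  shows "cg_sum c (Suc m) < fib (2 * m + 2) \<and>
    (twos_closed_below c (Suc m) \<longrightarrow> cg_sum c (Suc m) < fib (2 * m + 1))"
proof (induction m)
  case 0
  then show ?case by (simp add: cg_sum_def)
next
  case (Suc m)
  have sum: "cg_sum c (Suc (Suc m)) = cg_sum c (Suc m) + c (Suc m) * fib (2 * m + 2)"
    by (simp add: cg_sum_Suc)
  have fibs: "fib (2 * Suc m + 2) = fib (2 * m + 3) + fib (2 * m + 2)"
    "fib (2 * Suc m + 1) = fib (2 * m + 3)"
    using fib_plus_2[of "2 * m + 2"] by (simp_all add: numeral_3_eq_3)
  have mono: "fib (2 * m + 2) \<le> fib (2 * m + 3)" by (rule fib_mono) simp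
  note odd = fib_odd_Suc[of m]
  have "c (Suc m) \<le> 2" using assms by (rule cg_admissible_le_2)
  then consider "c (Suc m) = 0" | "c (Suc m) = 1" | "c (Suc m) = 2" by linarith
  then show ?case
  proof cases
    case 1
    then show ?thesis using Suc.IH sum fibs mono odd by simp
  next
    case 2
    then show ?thesis
      using Suc.IH sum fibs mono odd twos_closed_below_Suc_one[of c "Suc m"] by auto
  next
    case 3
    then show ?thesis
      using Suc.IH sum fibs mono odd twos_closed_below_Suc_two[of c "Suc m"]
        twos_closed_below_if_two[OF assms, of "Suc m"] by auto
  qed
qed

lemma cg_sum_less_if_top_digit_less:
  assumes "cg_admissible c" "c (Suc m) < c' (Suc m)"
  shows "cg_sum c (Suc (Suc m)) < cg_sum c' (Suc (Suc m))"
proof -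
  have "cg_sum c (Suc (Suc m)) < (c (Suc m) + 1) * fib (2 * m + 2)"
    using cg_sum_bound[OF assms(1), of m] by (simp add: cg_sum_Suc)
  also have "\<dots> \<le> c' (Suc m) * fib (2 * m + 2)"
    using assms(2) by (intro mult_right_mono) simp_all
  also have "\<dots> \<le> cg_sum c' (Suc (Suc m))" by (simp add: cg_sum_Suc)
  finally show ?thesis .
qed

lemma cg_sum_inj:
  assumes "cg_admissible c" "cg_admissible c'" "cg_sum c m = cg_sum c' m" "0 < i" "i < m"
  shows "c i = c' i"
  using assms(3-)
proof (induction m)
  case 0
  then show ?case by simp
next
  case (Suc m)
  show ?case
  proof (cases "c m = c' m")
    case True
    then have "cg_sum c m = cg_sum c' m" using Suc.prems(1) by (simp add: cg_sum_Suc)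
    then show ?thesis using Suc True less_Suc_eq by auto
  next
    case False
    then obtain m' where m': "m = Suc m'" using Suc.prems by (cases m) auto
    from False consider "c m < c' m" | "c' m < c m" by linarith
    then have "cg_sum c (Suc m) \<noteq> cg_sum c' (Suc m)"
      unfolding m' by cases (auto dest: cg_sum_less_if_top_digit_less[OF assms(1)]
        cg_sum_less_if_top_digit_less[OF assms(2)])
    then show ?thesis using Suc.prems(1) by contradiction
  qed
qed

lemma twos_closed_below_cong:
  assumes "\<And>k. k < m \<Longrightarrow> c k = c' k"
  shows "twos_closed_below c m \<longleftrightarrow> twos_closed_below c' m"
  unfolding twos_closed_below_def using assms order.strict_trans by metis

lemma cg_admissible_extend:
  assumes "cg_admissible c" "\<forall>i>m. c i = 0" "d \<le> 2"
    and "d = 2 \<longrightarrow> twos_closed_below c (Suc m)"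
  shows "cg_admissible (c(Suc m := d))"
  unfolding cg_admissible_def
proof (intro conjI allI impI)
  show "(c(Suc m := d)) i \<le> 2" for i
    using assms(3) cg_admissible_le_2[OF assms(1)] by simp
next
  fix i j assume ij: "i < j \<and> (c(Suc m := d)) i = 2 \<and> (c(Suc m := d)) j = 2"
  have "j \<le> Suc m"
  proof (rule ccontr)
    assume "\<not> j \<le> Suc m"
    then have "(c(Suc m := d)) j = 0" using assms(2) by simp
    with ij show False by simp
  qed
  with ij have i: "i < Suc m" "c i = 2" by auto
  show "\<exists>k. i < k \<and> k < j \<and> (c(Suc m := d)) k = 0"
  proof (cases "j = Suc m")
    case True
    with ij have "d = 2" by simp
    then obtain k where "i < k" "k < Suc m" "c k = 0"
      using assms(4) i unfolding twos_closed_below_def by blast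
    then show ?thesis using True by (intro exI[of _ k]) simp
  next
    case False
    then have "c j = 2" using ij by simp
    then obtain k where "i < k" "k < j" "c k = 0"
      using cg_admissible_zero_between[OF assms(1)] ij i by blast
    then show ?thesis using False \<open>j \<le> Suc m\<close> by (intro exI[of _ k]) simp
  qed
qed

lemma cg_exists:
  "n < fib (2 * m + 2) \<Longrightarrow> \<exists>c. cg_admissible c \<and> c 0 = 0 \<and> (\<forall>i>m. c i = 0) \<and>
     cg_sum c (Suc m) = n \<and> (n < fib (2 * m + 1) \<longrightarrow> twos_closed_below c (Suc m))"
proof (induction m arbitrary: n)
  case 0
  then show ?case
    by (intro exI[of _ "\<lambda>_. 0"]) (simp add: cg_admissible_def cg_sum_def twos_closed_below_def)
next
  case (Suc m)
  text \<open>Choose the top digit greedily; the remainder left by a 2 is below \<open>F(2m+1)\<close>, so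
    every earlier 2 is already closed.\<close>
  define a b where "a = fib (2 * m + 2)" and "b = fib (2 * m + 1)"
  have fibs: "fib (2 * Suc m + 2) = a + a + b" "fib (2 * Suc m + 1) = a + b"
    using fib_plus_2[of "2 * m + 2"] fib_odd_Suc[of m] unfolding a_def b_def
    by (simp_all add: numeral_3_eq_3)
  have "b \<le> a" unfolding a_def b_def by (rule fib_mono) simp
  define d :: nat where "d = (if n < a then 0 else if n < 2 * a then 1 else 2)"
  define r where "r = n - d * a"
  have d: "d \<le> 2" "r < a" "n = r + d * a"
    and two: "d = 2 \<Longrightarrow> r < b \<and> \<not> n < fib (2 * Suc m + 1)"
    and one: "d = 1 \<Longrightarrow> n < fib (2 * Suc m + 1) \<Longrightarrow> r < b"
    using Suc.prems \<open>b \<le> a\<close> unfolding fibs d_def r_def by (auto split: if_splits)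
  obtain c where c: "cg_admissible c" "c 0 = 0" "\<forall>i>m. c i = 0" "cg_sum c (Suc m) = r"
    and c_closed: "r < fib (2 * m + 1) \<Longrightarrow> twos_closed_below c (Suc m)"
    using Suc.IH[of r] d(2) unfolding a_def b_def by blast
  let ?c = "c(Suc m := d)"
  show ?case
  proof (intro exI conjI impI)
    show "cg_admissible ?c" by (rule cg_admissible_extend) (use c two c_closed d b_def in auto)
    show "?c 0 = 0" "\<forall>i>Suc m. ?c i = 0" using c by auto
    have "cg_sum ?c (Suc m) = r" using c(4) cg_sum_cong[of "Suc m" ?c c] by simp
    then show "cg_sum ?c (Suc (Suc m)) = n" using d(3) by (simp add: cg_sum_Suc a_def)
    assume n: "n < fib (2 * Suc m + 1)"
    then consider "d = 0" | "d = 1" using two d(1) by linarith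
    then show "twos_closed_below ?c (Suc (Suc m))"
    proof cases
      case 1
      then show ?thesis by (simp add: twos_closed_below_Suc_zero)
    next
      case 2
      then show ?thesis
        using twos_closed_below_Suc_one[of ?c "Suc m"] twos_closed_below_cong[of "Suc m" ?c c]
          c_closed one n unfolding b_def by simp
    qed
  qed
qed

section \<open>Existence and uniqueness of the decomposition\<close>

lemma less_fib_even: "n < fib (2 * n + 2)"
proof (induction n)
  case 0
  then show ?case by simp
next
  case (Suc n)
  have "fib (2 * Suc n + 2) = fib (2 * n + 3) + fib (2 * n + 2)"
    using fib_plus_2[of "2 * n + 2"] by (simp add: numeral_3_eq_3)
  moreover have "0 < fib (2 * n + 3)" by (simp add: fib_neq_0_nat)
  ultimately show ?case using Suc.IH by simp
qed

lemma less_if_zero_above: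
  fixes c :: "nat \<Rightarrow> nat"
  shows "\<forall>i\<ge>N. c i = 0 \<Longrightarrow> c i \<noteq> 0 \<Longrightarrow> i < N"
  by (metis not_less)

lemma sum_support_eq_cg_sum:
  assumes "\<forall>i\<ge>N. c i = 0"
  shows "(\<Sum>i\<in>{i. c i \<noteq> 0}. c i * fib (2 * i)) = cg_sum c N"
  unfolding cg_sum_def
proof (rule sum.mono_neutral_left)
  show "{i. c i \<noteq> 0} \<subseteq> {..<N}" using less_if_zero_above[OF assms] by blast
qed auto

lemma is_CG_iff:
  "is_CG n c \<longleftrightarrow> c 0 = 0 \<and> cg_admissible c \<and> (\<exists>N. (\<forall>i\<ge>N. c i = 0) \<and> cg_sum c N = n)"
proof
  assume "is_CG n c"
  then have c: "c 0 = 0" "\<forall>i. c i \<le> 2" "finite {i. c i \<noteq> 0}"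
    "n = (\<Sum>i\<in>{i. c i \<noteq> 0}. c i * fib (2 * i))"
    "\<forall>i j. 1 \<le> i \<and> i < j \<and> c i = 2 \<and> c j = 2 \<longrightarrow> (\<exists>k. i < k \<and> k < j \<and> c k = 0)"
    unfolding is_CG_def by blast+
  obtain N where "\<forall>i\<in>{i. c i \<noteq> 0}. i < N"
    using c(3) finite_nat_set_iff_bounded by blast
  then have zero: "\<forall>i\<ge>N. c i = 0" by (metis (mono_tags) leD mem_Collect_eq)
  have "cg_admissible c"
    unfolding cg_admissible_def
  proof (intro conjI allI impI)
    fix i j assume ij: "i < j \<and> c i = 2 \<and> c j = 2"
    with c(1) have "1 \<le> i" by (cases i) auto
    with ij c(5) show "\<exists>k. i < k \<and> k < j \<and> c k = 0" by blast
  qed (use c(2) in blast)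
  moreover have "cg_sum c N = n" using c(4) sum_support_eq_cg_sum[OF zero] by simp
  ultimately show "c 0 = 0 \<and> cg_admissible c \<and> (\<exists>N. (\<forall>i\<ge>N. c i = 0) \<and> cg_sum c N = n)"
    using c(1) zero by blast
next
  assume "c 0 = 0 \<and> cg_admissible c \<and> (\<exists>N. (\<forall>i\<ge>N. c i = 0) \<and> cg_sum c N = n)"
  then obtain N where c: "c 0 = 0" "cg_admissible c" "\<forall>i\<ge>N. c i = 0" "cg_sum c N = n"
    by blast
  have "finite {i. c i \<noteq> 0}"
    by (rule finite_subset[of _ "{..<N}"]) (use less_if_zero_above[OF c(3)] in auto)
  moreover have "n = (\<Sum>i\<in>{i. c i \<noteq> 0}. c i * fib (2 * i))"
    using c(4) sum_support_eq_cg_sum[OF c(3)] by simp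
  ultimately show "is_CG n c"
    unfolding is_CG_def using c(1) cg_admissible_le_2[OF c(2)] cg_admissible_zero_between[OF c(2)]
    by blast
qed

lemma is_CG_unique:
  assumes "is_CG n c" "is_CG n c'"
  shows "c = c'"
proof
  fix i
  from assms obtain N N' where N: "\<forall>i\<ge>N. c i = 0" "cg_sum c N = n"
    and N': "\<forall>i\<ge>N'. c' i = 0" "cg_sum c' N' = n"
    unfolding is_CG_iff by blast
  let ?M = "max N N' + Suc i"
  have "cg_sum c ?M = cg_sum c' ?M"
    using cg_sum_eq_if_zero_above[OF N(1)] cg_sum_eq_if_zero_above[OF N'(1)] N(2) N'(2) by simp
  then show "c i = c' i"
    using assms cg_sum_inj[of c c' ?M i] unfolding is_CG_iff by (cases i) auto
qed

lemma is_CG_exists: "\<exists>c. is_CG n c"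
proof -
  obtain c where "cg_admissible c" "c 0 = 0" "\<forall>i>n. c i = 0" "cg_sum c (Suc n) = n"
    using cg_exists[OF less_fib_even[of n]] by blast
  then have "is_CG n c" unfolding is_CG_iff by (intro conjI exI[of _ "Suc n"]) (simp_all add: Suc_le_eq)
  then show ?thesis by blast
qed

lemma CG_coeffs_eqI: "is_CG n c \<Longrightarrow> CG_coeffs n = c"
  unfolding CG_coeffs_def using is_CG_unique by blast

lemma is_CG_CG_coeffs: "is_CG n (CG_coeffs n)"
  using is_CG_exists CG_coeffs_eqI by metis

lemma fib_even_strict_mono: "0 < a \<Longrightarrow> a < b \<Longrightarrow> fib (2 * a) < fib (2 * b)"
proof -
  assume "0 < a" "a < b"
  then have "fib (2 * a) < fib (2 * a) + fib (2 * a + 1)" by (simp add: fib_neq_0_nat)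
  also have "\<dots> = fib (2 * a + 2)" using fib_plus_2[of "2 * a"] by simp
  also have "\<dots> \<le> fib (2 * b)" using \<open>a < b\<close> by (intro fib_mono) simp
  finally show ?thesis .
qed

lemma Min_CG_eq:
  assumes c: "is_CG n c" and k: "0 < k" "c k \<noteq> 0" "\<forall>i<k. c i = 0"
  shows "Min (CG n) = fib (2 * k)"
proof (rule Min_eqI)
  have CG: "CG n = (\<lambda>i. fib (2 * i)) ` {i. 1 \<le> i \<and> c i \<noteq> 0}"
    unfolding CG_def CG_coeffs_eqI[OF c] by blast
  obtain N where "\<forall>i\<ge>N. c i = 0" using c unfolding is_CG_iff by blast
  then have "{i. 1 \<le> i \<and> c i \<noteq> 0} \<subseteq> {..<N}" using less_if_zero_above by auto
  then show "finite (CG n)" unfolding CG using finite_subset by blast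
  show "fib (2 * k) \<in> CG n" unfolding CG using k by (intro image_eqI[of _ _ k]) simp_all
  fix y assume "y \<in> CG n"
  then obtain i where "y = fib (2 * i)" "c i \<noteq> 0" unfolding CG by blast
  moreover from \<open>c i \<noteq> 0\<close> k(3) have "k \<le> i" by (metis not_less)
  ultimately show "fib (2 * k) \<le> y" by (simp add: fib_mono)
qed

lemma mem_A_iff:
  assumes "0 < k"
  shows "n \<in> A k \<longleftrightarrow> CG_coeffs n k \<noteq> 0 \<and> (\<forall>i<k. CG_coeffs n i = 0)"
proof
  let ?c = "CG_coeffs n"
  have c: "is_CG n ?c" by (rule is_CG_CG_coeffs)
  assume n: "n \<in> A k"
  have "\<exists>i. ?c i \<noteq> 0"
  proof (rule ccontr)
    assume "\<not> (\<exists>i. ?c i \<noteq> 0)"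
    then have "n = 0" using c unfolding is_CG_def by simp
    with n show False unfolding A_def by simp
  qed
  define l where "l = (LEAST i. ?c i \<noteq> 0)"
  have l: "?c l \<noteq> 0" "\<forall>i<l. ?c i = 0"
    unfolding l_def using LeastI_ex[OF \<open>\<exists>i. ?c i \<noteq> 0\<close>] not_less_Least by blast+
  moreover have "0 < l" using l c unfolding is_CG_def by (cases l) auto
  ultimately have "fib (2 * l) = fib (2 * k)" using Min_CG_eq[OF c] n unfolding A_def by simp
  then have "l = k" using fib_even_strict_mono \<open>0 < l\<close> assms by (metis less_irrefl nat_neq_iff)
  with l show "?c k \<noteq> 0 \<and> (\<forall>i<k. ?c i = 0)" by simp
next
  assume c: "CG_coeffs n k \<noteq> 0 \<and> (\<forall>i<k. CG_coeffs n i = 0)"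
  have "is_CG 0 (\<lambda>_. 0)" unfolding is_CG_iff by (simp add: cg_admissible_def cg_sum_def)
  then have "n \<noteq> 0" using c CG_coeffs_eqI by (metis (mono_tags))
  with c assms show "n \<in> A k"
    unfolding A_def using Min_CG_eq[OF is_CG_CG_coeffs] by simp
qed

section \<open>Splitting off the lowest digit\<close>

definition digits_at :: "nat \<Rightarrow> nat \<Rightarrow> (nat \<Rightarrow> nat) \<Rightarrow> nat \<Rightarrow> nat" where
  "digits_at k d g i = (if i < k then 0 else if i = k then d else g (i - Suc k))"

definition twos_preceded :: "(nat \<Rightarrow> nat) \<Rightarrow> bool" where
  "twos_preceded g \<longleftrightarrow> (\<forall>j. g j = 2 \<longrightarrow> (\<exists>i<j. g i = 0))"

lemma digits_at_simps [simp]: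
  "i < k \<Longrightarrow> digits_at k d g i = 0"
  "digits_at k d g k = d"
  "digits_at k d g (Suc (k + j)) = g j"
  by (simp_all add: digits_at_def)

lemma digits_at_cases:
  obtains "i < k" | "i = k" | j where "i = Suc (k + j)"
  using less_iff_Suc_add by (metis add_Suc linorder_neqE_nat)

lemma digits_at_lowest: "\<forall>i<k. c i = 0 \<Longrightarrow> digits_at k (c k) (\<lambda>j. c (Suc k + j)) = c"
proof
  fix i assume "\<forall>i<k. c i = 0"
  then show "digits_at k (c k) (\<lambda>j. c (Suc k + j)) i = c i"
    by (cases i k rule: digits_at_cases) simp_all
qed

lemma cg_admissible_digits_atD:
  assumes "cg_admissible (digits_at k d g)"
  shows "d \<le> 2" "cg_admissible g" "d = 2 \<Longrightarrow> twos_preceded g"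
proof -
  note le2 = cg_admissible_le_2[OF assms] and between = cg_admissible_zero_between[OF assms]
  show "d \<le> 2" using le2[of k] by simp
  show "cg_admissible g"
    unfolding cg_admissible_def
  proof (intro conjI allI impI)
    show "g i \<le> 2" for i using le2[of "Suc k + i"] by simp
    fix i j assume "i < j \<and> g i = 2 \<and> g j = 2"
    then obtain l where "Suc k + i < l" "l < Suc k + j" "digits_at k d g l = 0"
      using between[of "Suc k + i" "Suc k + j"] by auto
    then show "\<exists>l. i < l \<and> l < j \<and> g l = 0"
      by (cases l k rule: digits_at_cases) (auto intro!: exI)
  qed
  assume "d = 2"
  show "twos_preceded g"
    unfolding twos_preceded_def
  proof (intro allI impI)
    fix j assume "g j = 2"
    then obtain l where "k < l" "l < Suc k + j" "digits_at k d g l = 0"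
      using between[of k "Suc k + j"] \<open>d = 2\<close> by auto
    then show "\<exists>i<j. g i = 0"
      by (cases l k rule: digits_at_cases) (auto intro!: exI)
  qed
qed

lemma cg_admissible_digits_atI:
  assumes "d \<le> 2" "cg_admissible g" "d = 2 \<Longrightarrow> twos_preceded g"
  shows "cg_admissible (digits_at k d g)"
  unfolding cg_admissible_def
proof (intro conjI allI impI)
  show "digits_at k d g i \<le> 2" for i
    using assms(1) cg_admissible_le_2[OF assms(2)] by (cases i k rule: digits_at_cases) simp_all
  fix i j assume ij: "i < j \<and> digits_at k d g i = 2 \<and> digits_at k d g j = 2"
  then obtain j' where j: "j = Suc k + j'" "g j' = 2"
    by (cases j k rule: digits_at_cases) auto
  consider "i = k" "d = 2" | i' where "i = Suc k + i'" "g i' = 2"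
    using ij by (cases i k rule: digits_at_cases) auto
  then show "\<exists>l. i < l \<and> l < j \<and> digits_at k d g l = 0"
  proof cases
    case 1
    then obtain l where "l < j'" "g l = 0"
      using assms(3) j(2) unfolding twos_preceded_def by blast
    then show ?thesis using 1 j by (intro exI[of _ "Suc k + l"]) simp
  next
    case 2
    with ij j have "i' < j'" by simp
    then obtain l where "i' < l" "l < j'" "g l = 0"
      using cg_admissible_zero_between[OF assms(2)] 2 j by blast
    then show ?thesis using 2 j by (intro exI[of _ "Suc k + l"]) simp
  qed
qed

lemma cg_admissible_shift:
  assumes "cg_admissible g"
  shows "cg_admissible (\<lambda>j. g (Suc j))" "g 0 = 2 \<Longrightarrow> twos_preceded (\<lambda>j. g (Suc j))"
  using cg_admissible_digits_atD[of 0 "g 0" "\<lambda>j. g (Suc j)"] digits_at_lowest[of 0 g] assms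
  by simp_all

definition even_fib_sum :: "(nat \<Rightarrow> nat) \<Rightarrow> nat \<Rightarrow> nat" where
  "even_fib_sum g N = (\<Sum>j<N. g j * fib (2 * j + 2))"

definition odd_fib_sum :: "(nat \<Rightarrow> nat) \<Rightarrow> nat \<Rightarrow> nat" where
  "odd_fib_sum g N = (\<Sum>j<N. g j * fib (2 * j + 3))"

lemma cg_sum_Suc_eq_even_fib_sum: "cg_sum c (Suc N) = even_fib_sum (\<lambda>j. c (Suc j)) N"
  unfolding cg_sum_def even_fib_sum_def sum.lessThan_Suc_shift by simp

lemma fib_even_add: "0 < k \<Longrightarrow> fib (2 * (Suc k + j)) = fib (2 * j + 3) * fib (2 * k) + fib (2 * j + 2) * fib (2 * k - 1)"
  using fib_add[of "2 * j + 2" "2 * k - 1"] by (simp add: algebra_simps numeral_3_eq_3)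

lemma cg_sum_digits_at:
  assumes "0 < k"
  shows "cg_sum (digits_at k d g) (Suc k + N) =
    (d + odd_fib_sum g N) * fib (2 * k) + even_fib_sum g N * fib (2 * k - 1)"
proof (induction N)
  case 0
  have "cg_sum (digits_at k d g) k = 0" unfolding cg_sum_def by simp
  then show ?case by (simp add: cg_sum_Suc odd_fib_sum_def even_fib_sum_def)
next
  case (Suc N)
  have "cg_sum (digits_at k d g) (Suc k + Suc N) = cg_sum (digits_at k d g) (Suc k + N) +
      g N * (fib (2 * N + 3) * fib (2 * k) + fib (2 * N + 2) * fib (2 * k - 1))"
    using cg_sum_Suc[of "digits_at k d g" "Suc k + N"] unfolding fib_even_add[OF assms] by simp
  then show ?case
    using Suc.IH by (simp add: odd_fib_sum_def even_fib_sum_def algebra_simps)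
qed

section \<open>The discrepancy \<open>X - \<phi> Y\<close>\<close>

lemma phi_squared: "phi * phi = phi + 1"
proof -
  have "sqrt 5 * sqrt 5 = 5" by simp
  then show ?thesis unfolding phi_def by (simp add: field_simps)
qed

lemma phi_bounds: "3 / 2 < phi" "phi < 5 / 3"
proof -
  have "11 / 5 < sqrt 5" by (rule real_less_rsqrt) (simp add: power2_eq_square)
  moreover have "sqrt 5 < 7 / 3" by (rule real_less_lsqrt) (simp_all add: power2_eq_square)
  ultimately show "3 / 2 < phi" "phi < 5 / 3" unfolding phi_def by simp_all
qed

definition fib_discrepancy :: "(nat \<Rightarrow> nat) \<Rightarrow> nat \<Rightarrow> real" where
  "fib_discrepancy g N = real (odd_fib_sum g N) - phi * real (even_fib_sum g N)"

lemma fib_3: "fib 3 = 2"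
  by (simp add: numeral_3_eq_3)

lemma fib_discrepancy_Suc:
  "fib_discrepancy g (Suc N) = (2 - phi) * (g 0 + fib_discrepancy (\<lambda>j. g (Suc j)) N)"
proof -
  let ?X = "real (odd_fib_sum (\<lambda>j. g (Suc j)) N)" and ?Y = "real (even_fib_sum (\<lambda>j. g (Suc j)) N)"
  have fibs: "fib (2 * Suc j + 2) = fib (2 * j + 3) + fib (2 * j + 2)"
    "fib (2 * Suc j + 3) = 2 * fib (2 * j + 3) + fib (2 * j + 2)" for j
  proof -
    have e: "2 * Suc j + 2 = 2 * j + 2 + 2" "2 * Suc j + 3 = 2 * j + 3 + 2"
      "2 * j + 2 + 1 = 2 * j + 3" "2 * j + 3 + 1 = 2 * Suc j + 2" by simp_all
    show "fib (2 * Suc j + 2) = fib (2 * j + 3) + fib (2 * j + 2)"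
      by (simp only: e fib_plus_2)
    then show "fib (2 * Suc j + 3) = 2 * fib (2 * j + 3) + fib (2 * j + 2)"
      by (simp only: e fib_plus_2)
  qed
  have "odd_fib_sum g (Suc N) = 2 * g 0 + 2 * odd_fib_sum (\<lambda>j. g (Suc j)) N + even_fib_sum (\<lambda>j. g (Suc j)) N"
    unfolding odd_fib_sum_def even_fib_sum_def sum.lessThan_Suc_shift fibs
    by (simp add: sum_distrib_left sum.distrib algebra_simps fib_3)
  moreover have "even_fib_sum g (Suc N) = g 0 + even_fib_sum (\<lambda>j. g (Suc j)) N + odd_fib_sum (\<lambda>j. g (Suc j)) N"
    unfolding odd_fib_sum_def even_fib_sum_def sum.lessThan_Suc_shift fibs
    by (simp add: sum.distrib algebra_simps)
  ultimately have "fib_discrepancy g (Suc N) = 2 * g 0 + 2 * ?X + ?Y - phi * (g 0 + ?Y + ?X)"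
    unfolding fib_discrepancy_def by simp
  also have "\<dots> = (2 - phi) * (g 0 + (?X - phi * ?Y)) + (phi + 1 - phi * phi) * ?Y"
    by (simp add: algebra_simps)
  finally show ?thesis unfolding phi_squared fib_discrepancy_def by simp
qed

lemma twos_preceded_Suc:
  "g 0 = 0 \<Longrightarrow> twos_preceded g"
  "g 0 = 1 \<Longrightarrow> twos_preceded g \<longleftrightarrow> twos_preceded (\<lambda>j. g (Suc j))"
  "g 0 = 2 \<Longrightarrow> \<not> twos_preceded g"
proof -
  show "g 0 = 0 \<Longrightarrow> twos_preceded g"
    unfolding twos_preceded_def by (metis gr0I zero_neq_numeral)
  show "g 0 = 2 \<Longrightarrow> \<not> twos_preceded g"
    unfolding twos_preceded_def by blast
  assume g0: "g 0 = 1"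
  show "twos_preceded g \<longleftrightarrow> twos_preceded (\<lambda>j. g (Suc j))"
    unfolding twos_preceded_def
  proof (intro iffI allI impI)
    fix j assume "\<forall>j. g j = 2 \<longrightarrow> (\<exists>i<j. g i = 0)" "g (Suc j) = 2"
    then obtain i where "i < Suc j" "g i = 0" by blast
    with g0 obtain i' where "i = Suc i'" by (cases i) auto
    with \<open>i < Suc j\<close> \<open>g i = 0\<close> show "\<exists>i<j. g (Suc i) = 0" by blast
  next
    fix j assume "\<forall>j. g (Suc j) = 2 \<longrightarrow> (\<exists>i<j. g (Suc i) = 0)" "g j = 2"
    moreover from this g0 obtain j' where "j = Suc j'" by (cases j) auto
    ultimately obtain i where "i < j'" "g (Suc i) = 0" by blast
    with \<open>j = Suc j'\<close> show "\<exists>i<j. g i = 0" by blast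
  qed
qed

lemma fib_discrepancy_bounds:
  assumes "cg_admissible g" "\<forall>j\<ge>N. g j = 0"
  shows "0 \<le> fib_discrepancy g N \<and> fib_discrepancy g N < 1 \<and>
    (fib_discrepancy g N < phi - 1 \<longleftrightarrow> twos_preceded g)"
  using assms
proof (induction N arbitrary: g)
  case 0
  then have "twos_preceded g" unfolding twos_preceded_def by simp
  then show ?case using phi_bounds by (simp add: fib_discrepancy_def odd_fib_sum_def even_fib_sum_def)
next
  case (Suc N)
  let ?g = "\<lambda>j. g (Suc j)" and ?E = "fib_discrepancy (\<lambda>j. g (Suc j)) N"
  have IH: "0 \<le> ?E" "?E < 1" "?E < phi - 1 \<longleftrightarrow> twos_preceded ?g"
    using Suc.IH[of ?g] Suc.prems cg_admissible_shift(1) by auto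
  have q: "0 < 2 - phi" "(2 - phi) * phi = phi - 1" "(2 - phi) * (1 + phi) = 1"
    using phi_bounds phi_squared by (simp_all add: algebra_simps)
  have "g 0 \<le> 2" using Suc.prems(1) by (rule cg_admissible_le_2)
  then consider "g 0 = 0" | "g 0 = 1" | "g 0 = 2" by linarith
  then show ?case
  proof cases
    case 1
    then have T: "fib_discrepancy g (Suc N) = (2 - phi) * ?E" by (simp add: fib_discrepancy_Suc)
    have "(2 - phi) * ?E \<le> 2 - phi" using IH q by (intro mult_left_le) auto
    moreover have "0 \<le> (2 - phi) * ?E" using IH q by simp
    ultimately have "0 \<le> fib_discrepancy g (Suc N)" "fib_discrepancy g (Suc N) < phi - 1"
      "fib_discrepancy g (Suc N) < 1" using T phi_bounds by linarith+
    with twos_preceded_Suc(1)[of g, OF 1] show ?thesis by blast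
  next
    case 2
    then have T: "fib_discrepancy g (Suc N) = (2 - phi) * (1 + ?E)" by (simp add: fib_discrepancy_Suc)
    have "(2 - phi) * (1 + ?E) \<le> (2 - phi) * 2" using IH q by (intro mult_left_mono) auto
    also have "\<dots> < 1" using phi_bounds by simp
    finally have "fib_discrepancy g (Suc N) < 1" unfolding T .
    moreover have "0 \<le> fib_discrepancy g (Suc N)" unfolding T using IH q by simp
    moreover have "fib_discrepancy g (Suc N) < phi - 1 \<longleftrightarrow> ?E < phi - 1"
      using q(1) mult_less_cancel_left_pos[of "2 - phi" "1 + ?E" phi] unfolding T q(2) by (auto simp: algebra_simps)
    ultimately show ?thesis using IH(3) twos_preceded_Suc(2)[of g, OF 2] by blast
  next
    case 3
    then have T: "fib_discrepancy g (Suc N) = (2 - phi) * (2 + ?E)" by (simp add: fib_discrepancy_Suc)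
    have "phi - 1 \<le> (2 - phi) * 2" using phi_bounds by simp
    also have "\<dots> \<le> (2 - phi) * (2 + ?E)" using IH q by (intro mult_left_mono) auto
    finally have lower: "phi - 1 \<le> fib_discrepancy g (Suc N)" unfolding T .
    have "twos_preceded ?g" using cg_admissible_shift(2) Suc.prems(1) 3 .
    then have "(2 - phi) * (2 + ?E) < (2 - phi) * (1 + phi)"
      using IH q by (intro mult_strict_left_mono) auto
    then have "fib_discrepancy g (Suc N) < 1" unfolding T q(3) .
    with lower have "0 \<le> fib_discrepancy g (Suc N)" "fib_discrepancy g (Suc N) < 1"
      "\<not> fib_discrepancy g (Suc N) < phi - 1" using phi_bounds by linarith+
    with twos_preceded_Suc(3)[of g, OF 3] show ?thesis by blast
  qed
qed

lemma nat_floor_divide_eq_iff: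
  fixes p x :: real
  assumes "0 < p" "0 \<le> x"
  shows "nat \<lfloor>x / p\<rfloor> = y \<longleftrightarrow> p * real y \<le> x \<and> x < p * (real y + 1)"
proof -
  have "0 \<le> \<lfloor>x / p\<rfloor>" using assms by simp
  then have "nat \<lfloor>x / p\<rfloor> = y \<longleftrightarrow> \<lfloor>x / p\<rfloor> = int y" by linarith
  also have "\<dots> \<longleftrightarrow> real y \<le> x / p \<and> x / p < real y + 1" by (simp add: floor_eq_iff)
  also have "\<dots> \<longleftrightarrow> p * real y \<le> x \<and> x < p * (real y + 1)"
    using assms(1) by (simp add: pos_le_divide_eq pos_divide_less_eq mult.commute)
  finally show ?thesis .
qed

lemma lowest_digit_iff:
  assumes "cg_admissible g" "\<forall>j\<ge>N. g j = 0"
  defines "X \<equiv> odd_fib_sum g N" and "Y \<equiv> even_fib_sum g N"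
  shows "0 < d \<and> d \<le> 2 \<and> (d = 2 \<longrightarrow> twos_preceded g) \<longleftrightarrow>
    phi * real Y \<le> real (d + X) - 1 \<and> real (d + X) - 1 < phi * (real Y + 1)"
proof -
  let ?E = "fib_discrepancy g N"
  have E: "0 \<le> ?E" "?E < 1" "?E < phi - 1 \<longleftrightarrow> twos_preceded g"
    using fib_discrepancy_bounds[OF assms(1,2)] by auto
  have "phi * real Y \<le> real (d + X) - 1 \<and> real (d + X) - 1 < phi * (real Y + 1) \<longleftrightarrow>
      0 \<le> real d - 1 + ?E \<and> real d - 1 + ?E < phi"
    unfolding fib_discrepancy_def X_def Y_def by (auto simp: algebra_simps)
  moreover consider "d = 0" | "d = 1" | "d = 2" | "3 \<le> d" by linarith
  then have "0 < d \<and> d \<le> 2 \<and> (d = 2 \<longrightarrow> twos_preceded g) \<longleftrightarrow>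
      0 \<le> real d - 1 + ?E \<and> real d - 1 + ?E < phi"
  proof cases
    case 4
    then have "2 \<le> real d - 1" by simp
    then show ?thesis using 4 E phi_bounds by auto
  qed (use E phi_bounds in auto)
  ultimately show ?thesis by blast
qed

lemma A_memE:
  assumes "0 < k" "n \<in> A k"
  obtains "n = fib (2 * k)"
    | m where "n = (m + 2) * fib (2 * k) + nat \<lfloor>real (m + 1) / phi\<rfloor> * fib (2 * k - 1)"
proof -
  let ?c = "CG_coeffs n"
  define d g where "d = ?c k" and "g = (\<lambda>j. ?c (Suc k + j))"
  have "d \<noteq> 0" "\<forall>i<k. ?c i = 0" using assms mem_A_iff unfolding d_def by blast+
  have c: "digits_at k d g = ?c"
    unfolding d_def g_def by (rule digits_at_lowest) fact
  obtain N where N: "\<forall>i\<ge>N. ?c i = 0" "cg_sum ?c N = n"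
    using is_CG_CG_coeffs[of n] unfolding is_CG_iff by blast
  have g: "\<forall>j\<ge>N. g j = 0" unfolding g_def using N(1) by simp
  define X Y where "X = odd_fib_sum g N" and "Y = even_fib_sum g N"
  have "cg_sum ?c (Suc k + N) = n" using cg_sum_eq_if_zero_above[OF N(1)] N(2) by simp
  then have n: "n = (d + X) * fib (2 * k) + Y * fib (2 * k - 1)"
    using cg_sum_digits_at[OF assms(1), of d g N] unfolding c X_def Y_def by simp
  have "cg_admissible ?c" using is_CG_CG_coeffs[of n] unfolding is_CG_iff by blast
  then have "d \<le> 2" "cg_admissible g" "d = 2 \<Longrightarrow> twos_preceded g"
    using cg_admissible_digits_atD[of k d g] unfolding c by blast+
  then have Y: "phi * real Y \<le> real (d + X) - 1" "real (d + X) - 1 < phi * (real Y + 1)"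
    using lowest_digit_iff[OF _ g, of d] \<open>d \<noteq> 0\<close> unfolding X_def Y_def by auto
  show ?thesis
  proof (cases "2 \<le> d + X")
    case True
    define m where "m = d + X - 2"
    have dX: "d + X = m + 2" using True unfolding m_def by simp
    have "nat \<lfloor>real (m + 1) / phi\<rfloor> = Y"
      using Y phi_bounds unfolding dX by (subst nat_floor_divide_eq_iff) simp_all
    then show ?thesis using that(2)[of m] n unfolding dX by simp
  next
    case False
    with \<open>d \<noteq> 0\<close> have "d = 1" "X = 0" by auto
    with Y(1) phi_bounds have "Y = 0" by (simp add: mult_le_0_iff)
    with \<open>d = 1\<close> \<open>X = 0\<close> show ?thesis using that(1) n by simp
  qed
qed

lemma digits_at_mem_A:
  assumes "0 < k" "0 < d" "cg_admissible (digits_at k d g)" "\<forall>j\<ge>N. g j = 0"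
  shows "cg_sum (digits_at k d g) (Suc k + N) \<in> A k"
proof -
  have "\<forall>i\<ge>Suc k + N. digits_at k d g i = 0"
    using assms(4) by (auto simp: digits_at_def)
  then have "is_CG (cg_sum (digits_at k d g) (Suc k + N)) (digits_at k d g)"
    unfolding is_CG_iff using assms(1,3) by auto
  then show ?thesis
    using assms(1,2) CG_coeffs_eqI mem_A_iff by simp
qed

lemma fib_even_mem_A: "0 < k \<Longrightarrow> fib (2 * k) \<in> A k"
  using digits_at_mem_A[of k 1 "\<lambda>_. 0" 0] cg_admissible_digits_atI[of 1 "\<lambda>_. 0" k]
    cg_sum_digits_at[of k 1 "\<lambda>_. 0" 0]
  by (simp add: cg_admissible_def odd_fib_sum_def even_fib_sum_def)

lemma floor_form_mem_A:
  assumes "0 < k"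
  shows "(m + 2) * fib (2 * k) + nat \<lfloor>real (m + 1) / phi\<rfloor> * fib (2 * k - 1) \<in> A k"
proof -
  define Y where "Y = nat \<lfloor>real (m + 1) / phi\<rfloor>"
  have Y: "phi * real Y \<le> real (m + 1)" "real (m + 1) < phi * (real Y + 1)"
    using nat_floor_divide_eq_iff[of phi "real (m + 1)" Y] phi_bounds unfolding Y_def by simp_all
  obtain N where N: "cg_admissible (CG_coeffs Y)" "\<forall>i\<ge>N. CG_coeffs Y i = 0" "cg_sum (CG_coeffs Y) N = Y"
    using is_CG_CG_coeffs[of Y] unfolding is_CG_iff by blast
  define g where "g = (\<lambda>j. CG_coeffs Y (Suc j))"
  have g: "cg_admissible g" "\<forall>j\<ge>N. g j = 0"
    unfolding g_def using cg_admissible_shift(1)[OF N(1)] N(2) by simp_all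
  have "even_fib_sum g N = Y"
    using cg_sum_eq_if_zero_above[OF N(2), of "Suc N"] N(3) cg_sum_Suc_eq_even_fib_sum
    unfolding g_def by simp
  define X where "X = odd_fib_sum g N"
  have "real X < phi * real Y + 1"
    using fib_discrepancy_bounds[OF g] \<open>even_fib_sum g N = Y\<close> unfolding X_def fib_discrepancy_def by simp
  with Y have "X \<le> m + 1" by simp
  define d where "d = m + 2 - X"
  have dX: "d + X = m + 2" unfolding d_def using \<open>X \<le> m + 1\<close> by simp
  then have "0 < d \<and> d \<le> 2 \<and> (d = 2 \<longrightarrow> twos_preceded g)"
    using lowest_digit_iff[OF g, of d] Y \<open>even_fib_sum g N = Y\<close> unfolding X_def by simp
  then have "cg_sum (digits_at k d g) (Suc k + N) \<in> A k"
    using digits_at_mem_A[OF assms] g cg_admissible_digits_atI by blast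
  then show ?thesis
    unfolding cg_sum_digits_at[OF assms] using dX \<open>even_fib_sum g N = Y\<close>
    unfolding X_def Y_def by simp
qed

theorem proposition4p3:
  fixes k :: nat
  assumes "1 \<le> k"
  shows "A k = {fib (2 * k)} \<union>
    {(n + 2) * fib (2 * k) + nat \<lfloor>real (n + 1) / phi\<rfloor> * fib (2 * k - 1) | n :: nat. True}"
proof -
  from assms have k: "0 < k" by simp
  show ?thesis (is "_ = ?R")
  proof (intro equalityI subsetI)
    fix n assume "n \<in> A k"
    then show "n \<in> ?R" by (cases rule: A_memE[OF k]) auto
  next
    fix n assume "n \<in> ?R"
    then show "n \<in> A k" using fib_even_mem_A[OF k] floor_form_mem_A[OF k] by auto
  qed
qed

end
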